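(* Let $\alpha=(\alpha_1,\dots,\alpha_k)\in\mathbb N^k$ with $k\ge1$ and $\alpha_k>0$, and let $\beta=(\beta_1,\dots,\beta_k)\in\mathbb N^k$. Then $$\widehat M_{\binom{\alpha}{\beta}}=\sum_{I=(i_1,\dots,i_k)}c_{\beta,I}\,M_{(0^{i_1},\alpha_1,0^{i_2},\alpha_2,\dots,0^{i_k},\alpha_k)},$$ where the sum is over all $I$ with $0\le i_j\le\beta_j+\beta_{j+1}+\dots+\beta_k$ for $j=1,\dots,k$.
   Context: $\mathbb P$ and $\mathbb N$ denote positive and nonnegative integers, and $[n]=\{1,\dots,n\}$. Let $X=\{x_i:i\in\mathbb P\}$ be commuting indeterminates. $0^i$ denotes $i$ consecutive zeros. For a sequence $\gamma\in\mathbb N^m$ with $\gamma_m>0$, $M_\gamma=\sum_{0<i_1<\cdots<i_m}x_{i_1}^{\gamma_1}\cdots x_{i_m}^{\gamma_m}$. Also $$\widehat M_{\binom{\alpha}{\beta}}=\sum_{0<i_1<\cdots<i_k}i_1^{\beta_1}\cdots i_k^{\beta_k}x_{i_1}^{\alpha_1}\cdots x_{i_k}^{\alpha_k}.$$ $c_{\beta,I}$ is defined as follows. Put $b_j=\beta_1+\dots+\beta_j$ and $N_j=(i_1+1)+\dots+(i_j+1)$. Then $c_{\beta,I}$ is the number of maps $f:[b_k]\to[N_k]$ with $f([b_j])\subseteq[N_j]$ for all $j$ and $f([b_k])\cup\{N_1,\dots,N_k\}=[N_k]$. If $b_k=0$, the empty map is the only map. *)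

theory Defs
  imports Main "HOL-Library.FuncSet"
begin

text \<open>Formal power series in the commuting variables x_1, x_2, ... are represented by
  their coefficient functions: a monomial is an exponent vector e :: nat \<Rightarrow> nat
  (e v = exponent of x_v), and a series is a map from monomials to coefficients.\<close>

type_synonym series = "(nat \<Rightarrow> nat) \<Rightarrow> nat"

definition monom :: "nat list \<Rightarrow> nat list \<Rightarrow> nat \<Rightarrow> nat" where
  "monom g is = (\<lambda>v. \<Sum>j<length g. if is ! j = v then g ! j else 0)"

definition idx_tuples :: "nat \<Rightarrow> nat list set" where
  "idx_tuples m = {is. length is = m \<and> sorted_wrt (<) is \<and> 0 \<notin> set is}"

definition M :: "nat list \<Rightarrow> series" where
  "M g = (\<lambda>e. card {is \<in> idx_tuples (length g). monom g is = e})"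

definition Mhat :: "nat list \<Rightarrow> nat list \<Rightarrow> series" where
  "Mhat a b = (\<lambda>e. \<Sum>is \<in> {is \<in> idx_tuples (length a). monom a is = e}.
                      \<Prod>j<length a. (is ! j) ^ (b ! j))"

definition pad_comp :: "nat list \<Rightarrow> nat list \<Rightarrow> nat list" where
  "pad_comp a I = concat (map (\<lambda>j. replicate (I ! j) 0 @ [a ! j]) [0..<length a])"

definition bsum :: "nat list \<Rightarrow> nat \<Rightarrow> nat" where
  "bsum b j = sum_list (take j b)"

definition Nsum :: "nat list \<Rightarrow> nat \<Rightarrow> nat" where
  "Nsum I j = sum_list (map Suc (take j I))"

definition c_coef :: "nat list \<Rightarrow> nat list \<Rightarrow> nat" where
  "c_coef b I = (let k = length b in
     card {f \<in> {1..bsum b k} \<rightarrow>\<^sub>E {1..Nsum I k}.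
             (\<forall>j\<in>{1..k}. f ` {1..bsum b j} \<subseteq> {1..Nsum I j}) \<and>
             f ` {1..bsum b k} \<union> {Nsum I j | j. j \<in> {1..k}} = {1..Nsum I k}})"

definition I_range :: "nat list \<Rightarrow> nat list set" where
  "I_range b = {I. length I = length b \<and> (\<forall>j<length b. I ! j \<le> sum_list (drop j b))}"

end

(*
  Coefficientwise, both sides count the same finite set.  For a strictly increasing tuple
  t = (t_1 < ... < t_k), the weight t_1^beta_1 ... t_k^beta_k of x_t^alpha in Mhat is the
  number of maps f : [b_k] -> P sending the j-th block of beta_j arguments into [t_j].
  Encode a pair (t, f) by the increasing list s of all values of t and f, together with the
  positions of these values in s.  The positions N_1 < ... < N_k of t_1, ..., t_k determine
  the gaps i_j = N_j - N_(j-1) - 1, and the positions of the values of f form a map g counted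
  by c_(beta,I); its covering condition says that every entry of s is used, and it forces
  i_j <= beta_j + ... + beta_k.  As the padded composition (0^i_1, alpha_1, ..., 0^i_k, alpha_k)
  carries alpha_j exactly at position N_j, the monomial indexed by s in the corresponding M is
  x_t^alpha.  Conversely (I, g, s) determines (t, f) = (s o N, s o g), and the two
  constructions are inverse to each other.
*)

theory Submission
  imports Defs
begin

lemma sorted_wrt_less_nth_less_iff:
  fixes s :: "'a::linorder list"
  assumes "sorted_wrt (<) s" "i < length s" "j < length s"
  shows "s ! i < s ! j \<longleftrightarrow> i < j"
  using assms sorted_wrt_nth_less[OF assms(1)]
  by (metis linorder_neq_iff order_less_asym)

lemma sorted_wrt_less_nth_le_iff:
  fixes s :: "'a::linorder list"
  assumes "sorted_wrt (<) s" "i < length s" "j < length s"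
  shows "s ! i \<le> s ! j \<longleftrightarrow> i \<le> j"
  using sorted_wrt_less_nth_less_iff[OF assms(1) assms(3) assms(2)] by (simp add: not_less[symmetric])

definition rank :: "'a list \<Rightarrow> 'a \<Rightarrow> nat" where
  "rank s v = (THE i. i < length s \<and> s ! i = v)"

lemma rank_nth: "distinct s \<Longrightarrow> i < length s \<Longrightarrow> rank s (s ! i) = i"
  unfolding rank_def by (rule the_equality) (auto simp: nth_eq_iff_index_eq)

lemma nth_rank: "distinct s \<Longrightarrow> v \<in> set s \<Longrightarrow> rank s v < length s \<and> s ! rank s v = v"
  by (metis in_set_conv_nth rank_nth)

lemma rank_le_iff:
  fixes s :: "'a::linorder list"
  assumes "sorted_wrt (<) s" and "v \<in> set s" and "w \<in> set s"
  shows "rank s v \<le> rank s w \<longleftrightarrow> v \<le> w"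
  using assms nth_rank[of s v] nth_rank[of s w] sorted_wrt_less_nth_le_iff[of s "rank s v" "rank s w"]
  by (simp add: strict_sorted_iff)

lemma rank_less_iff:
  fixes s :: "'a::linorder list"
  assumes "sorted_wrt (<) s" and "v \<in> set s" and "w \<in> set s"
  shows "rank s v < rank s w \<longleftrightarrow> v < w"
  using rank_le_iff[OF assms(1) assms(3,2)] by (simp add: not_le[symmetric])

lemma image_Suc_rank: "distinct s \<Longrightarrow> (\<lambda>v. Suc (rank s v)) ` set s = {1..length s}"
proof -
  assume d: "distinct s"
  have "(\<lambda>v. Suc (rank s v)) ` set s = (\<lambda>v. Suc (rank s v)) ` (!) s ` {..<length s}"
    by (simp add: lessThan_atLeast0 nth_image)
  also have "\<dots> = Suc ` {..<length s}"
    unfolding image_image using rank_nth[OF d] by (intro image_cong) simp_all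
  finally show ?thesis unfolding image_Suc_lessThan .
qed

lemma rank_greatest:
  fixes s :: "'a::linorder list"
  assumes "sorted_wrt (<) s" and "m \<in> set s" and "\<forall>v\<in>set s. v \<le> m"
  shows "Suc (rank s m) = length s"
proof -
  have d: "distinct s" using assms(1) by (simp add: strict_sorted_iff)
  have "i \<le> rank s m" if "i < length s" for i
    using that assms rank_le_iff[OF assms(1) _ assms(2), of "s ! i"] rank_nth[OF d that] by simp
  then show ?thesis
    using nth_rank[OF d assms(2)] by (metis Suc_lessI diff_Suc_1 lessI not_less_eq_eq zero_less_Suc)
qed

lemma sorted_wrt_map_rank:
  fixes s :: "'a::linorder list"
  assumes "sorted_wrt (<) s" and "set t \<subseteq> set s" and "sorted_wrt (<) t"
  shows "sorted_wrt (<) (map (rank s) t)"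
  unfolding sorted_wrt_map
  by (rule sorted_wrt_mono_rel[OF _ assms(3)]) (use assms rank_less_iff in blast)

lemma bsum_0 [simp]: "bsum b 0 = 0"
  by (simp add: bsum_def)

lemma bsum_Suc: "j < length b \<Longrightarrow> bsum b (Suc j) = bsum b j + b ! j"
  by (simp add: bsum_def take_Suc_conv_app_nth)

lemma bsum_mono: "j \<le> j' \<Longrightarrow> bsum b j \<le> bsum b j'"
  by (metis bsum_def le_Suc_ex le_add1 sum_list_append take_add)

lemma sum_list_drop_eq_bsum_diff:
  "j \<le> length b \<Longrightarrow> sum_list (drop j b) = bsum b (length b) - bsum b j"
  by (metis append_take_drop_id add_diff_cancel_left' bsum_def sum_list_append take_all_iff order_refl)

lemma Nsum_0 [simp]: "Nsum I 0 = 0"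
  by (simp add: Nsum_def)

lemma Nsum_Suc: "j < length I \<Longrightarrow> Nsum I (Suc j) = Nsum I j + Suc (I ! j)"
  by (simp add: Nsum_def take_Suc_conv_app_nth)

lemma Nsum_append: "j \<le> length I \<Longrightarrow> Nsum (I @ J) j = Nsum I j"
  by (simp add: Nsum_def)

lemma Nsum_strict_mono: "j < j' \<Longrightarrow> j' \<le> length I \<Longrightarrow> Nsum I j < Nsum I j'"
proof (induction j')
  case (Suc j')
  then show ?case
    using Nsum_Suc[of j' I] by (cases "j = j'") (auto simp: less_Suc_eq)
qed simp

lemma Nsum_mono: "j \<le> j' \<Longrightarrow> j' \<le> length I \<Longrightarrow> Nsum I j \<le> Nsum I j'"
  using Nsum_strict_mono[of j j' I] by (cases "j = j'") auto

lemma Nsum_Suc_bounds: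
  "j < length I \<Longrightarrow> 0 < Nsum I (Suc j) \<and> Nsum I (Suc j) \<le> Nsum I (length I)"
  using Nsum_Suc[of j I] Nsum_mono[of "Suc j" "length I" I] by simp

lemma Nsum_eq_imp_eq:
  assumes "length I = length I'" and "\<And>j. j < length I \<Longrightarrow> Nsum I (Suc j) = Nsum I' (Suc j)"
  shows "I = I'"
proof (rule nth_equalityI)
  fix j assume j: "j < length I"
  have "Nsum I j = Nsum I' j"
    using assms(2)[of "j - 1"] j by (cases j) auto
  then show "I ! j = I' ! j"
    using assms Nsum_Suc[of j I] Nsum_Suc[of j I'] j by simp
qed (fact assms(1))

definition gaps :: "nat list \<Rightarrow> nat list" where
  "gaps p = map (\<lambda>j. p ! j - (if j = 0 then 0 else Suc (p ! (j - 1)))) [0..<length p]"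

lemma length_gaps [simp]: "length (gaps p) = length p"
  by (simp add: gaps_def)

lemma Nsum_gaps:
  assumes "sorted_wrt (<) p" and "j < length p"
  shows "Nsum (gaps p) (Suc j) = Suc (p ! j)"
  using assms(2)
proof (induction j)
  case 0
  then show ?case using Nsum_Suc[of 0 "gaps p"] by (simp add: gaps_def)
next
  case (Suc j)
  have "p ! j < p ! Suc j"
    using assms(1) Suc.prems by (simp add: sorted_wrt_nth_less)
  then show ?case
    using Suc Nsum_Suc[of "Suc j" "gaps p"] by (simp add: gaps_def)
qed

section \<open>Monomials of padded compositions\<close>

text \<open>The entries of \<open>s\<close> at the positions \<open>N\<^sub>1, \<dots>, N\<^sub>k\<close> (counted from 1), which are
  where \<^term>\<open>pad_comp a I\<close> carries the entries of \<open>a\<close>.\<close>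
definition marked :: "nat list \<Rightarrow> nat list \<Rightarrow> nat list" where
  "marked I s = map (\<lambda>j. s ! (Nsum I (Suc j) - 1)) [0..<length I]"

lemma length_marked [simp]: "length (marked I s) = length I"
  by (simp add: marked_def)

lemma nth_marked: "j < length I \<Longrightarrow> marked I s ! j = s ! (Nsum I (Suc j) - 1)"
  by (simp add: marked_def)

lemma marked_snoc:
  assumes "length s = Nsum I (length I)"
  shows "marked (I @ [i]) (s @ s') = marked I s @ [s' ! i]"
proof (rule nth_equalityI)
  fix j assume "j < length (marked (I @ [i]) (s @ s'))"
  then have j: "j \<le> length I" by simp
  show "marked (I @ [i]) (s @ s') ! j = (marked I s @ [s' ! i]) ! j"
  proof (cases "j = length I")
    case True
    then show ?thesis
      using assms Nsum_Suc[of j "I @ [i]"] Nsum_append[of j I "[i]"]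
      by (simp add: nth_marked nth_append)
  next
    case False
    then have "j < length I" using j by simp
    moreover from this have "Nsum I (Suc j) - 1 < length s"
      using assms Nsum_Suc_bounds[of j I] by linarith
    ultimately show ?thesis
      using Nsum_append[of "Suc j" I "[i]"] by (simp add: nth_marked nth_append)
  qed
qed simp

lemma monom_Nil [simp]: "monom [] s = (\<lambda>v. 0)"
  by (simp add: monom_def fun_eq_iff)

lemma monom_Cons: "monom (x # g) (y # s) v = (if y = v then x else 0) + monom g s v"
  unfolding monom_def by (simp only: length_Cons sum.lessThan_Suc_shift) (auto intro!: sum.cong)

lemma monom_append:
  "length g = length s \<Longrightarrow> monom (g @ g') (s @ s') v = monom g s v + monom g' s' v"
proof (induction g arbitrary: s)
  case (Cons x g)
  then obtain y s0 where "s = y # s0" by (cases s) auto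
  with Cons show ?case by (simp add: monom_Cons)
qed simp

lemma monom_zeros_snoc: "length r = Suc i \<Longrightarrow> monom (replicate i 0 @ [c]) r = monom [c] [r ! i]"
  by (simp add: monom_def fun_eq_iff nth_append)

lemma pad_comp_snoc:
  "length I = length a \<Longrightarrow> pad_comp (a @ [c]) (I @ [i]) = pad_comp a I @ replicate i 0 @ [c]"
  by (simp add: pad_comp_def nth_append) (rule arg_cong[where f = concat], rule map_cong, auto)

lemma length_pad_comp: "length I = length a \<Longrightarrow> length (pad_comp a I) = Nsum I (length a)"
proof (induction a arbitrary: I rule: rev_induct)
  case (snoc c a)
  then obtain I0 i where "I = I0 @ [i]" "length I0 = length a"
    by (cases I rule: rev_exhaust) auto
  then show ?case
    using snoc.IH Nsum_Suc[of "length a" I] Nsum_append[of "length a" I0 "[i]"]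
    by (simp add: pad_comp_snoc nth_append)
qed (simp add: pad_comp_def)

lemma last_pad_comp:
  "length I = length a \<Longrightarrow> a \<noteq> [] \<Longrightarrow> pad_comp a I \<noteq> [] \<and> last (pad_comp a I) = last a"
  by (cases a rule: rev_exhaust; cases I rule: rev_exhaust) (auto simp: pad_comp_snoc)

lemma monom_pad_comp:
  "length I = length a \<Longrightarrow> length s = Nsum I (length a) \<Longrightarrow>
   monom (pad_comp a I) s = monom a (marked I s)"
proof (induction a arbitrary: I s rule: rev_induct)
  case (snoc c a)
  then obtain I0 i where I: "I = I0 @ [i]" and len_I0: "length I0 = length a"
    by (cases I rule: rev_exhaust) auto
  define n where "n = Nsum I0 (length a)"
  have len_s: "length s = n + Suc i"
    using snoc.prems I Nsum_Suc[of "length a" I] Nsum_append[of "length a" I0 "[i]"] len_I0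
    by (simp add: nth_append n_def)
  have "monom (pad_comp (a @ [c]) I) s v = monom a (marked I0 (take n s)) v + monom [c] [drop n s ! i] v"
    for v
    using monom_append[of "pad_comp a I0" "take n s" "replicate i 0 @ [c]" "drop n s" v]
      monom_zeros_snoc[of "drop n s" i c] snoc.IH[OF len_I0, of "take n s"]
      len_s length_pad_comp[OF len_I0]
    by (simp add: I pad_comp_snoc[OF len_I0] n_def)
  moreover have "marked I s = marked I0 (take n s) @ [drop n s ! i]"
    using marked_snoc[of "take n s" I0 i "drop n s"] len_s len_I0 by (simp add: I n_def)
  ultimately show ?case
    using len_I0 by (simp add: monom_append fun_eq_iff)
qed (simp add: pad_comp_def)

definition monom_fiber :: "nat list \<Rightarrow> (nat \<Rightarrow> nat) \<Rightarrow> nat list set" where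
  "monom_fiber g e = {s \<in> idx_tuples (length g). monom g s = e}"

lemma M_eq_card_monom_fiber: "M g e = card (monom_fiber g e)"
  by (simp add: M_def monom_fiber_def)

lemma monom_fiber_pad_comp_iff:
  assumes "length I = length a"
  shows "s \<in> monom_fiber (pad_comp a I) e
    \<longleftrightarrow> s \<in> idx_tuples (Nsum I (length a)) \<and> monom a (marked I s) = e"
  using monom_pad_comp[OF assms] length_pad_comp[OF assms]
  by (auto simp: monom_fiber_def idx_tuples_def)

lemma monom_nth_ge: "j < length g \<Longrightarrow> g ! j \<le> monom g s (s ! j)"
  unfolding monom_def
  using member_le_sum[of j "{..<length g}" "\<lambda>i. if s ! i = s ! j then g ! i else 0"] by simp

lemma monom_pos_imp_mem: "length s = length g \<Longrightarrow> 0 < monom g s v \<Longrightarrow> v \<in> set s"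
proof (rule ccontr)
  assume "length s = length g" "0 < monom g s v" "v \<notin> set s"
  then have "\<forall>j\<in>{..<length g}. (if s ! j = v then g ! j else 0) = 0"
    by (auto simp: nth_mem)
  then show False
    using \<open>0 < monom g s v\<close> unfolding monom_def by (simp add: sum.neutral)
qed

lemma finite_monom_fiber:
  assumes "g \<noteq> []" and "0 < last g"
  shows "finite (monom_fiber g e)"
proof (cases "monom_fiber g e = {}")
  case False
  then obtain s0 where s0: "s0 \<in> monom_fiber g e" by blast
  \<comment> \<open>The last index of every tuple in the fiber carries the exponent \<open>last g > 0\<close>,
    so it occurs in the fixed tuple \<open>s0\<close>.\<close>
  let ?n = "length g - 1"
  have "set s \<subseteq> {..Max (set s0)}" if s: "s \<in> monom_fiber g e" for s
  proof
    fix v assume "v \<in> set s"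
    then obtain i where i: "i < length g" "v = s ! i"
      using s by (auto simp: monom_fiber_def idx_tuples_def in_set_conv_nth)
    have sorted: "sorted_wrt (<) s" "length s = length g"
      using s by (auto simp: monom_fiber_def idx_tuples_def)
    have "0 < monom g s0 (s ! ?n)"
      using monom_nth_ge[of ?n g s] assms s s0 by (simp add: monom_fiber_def last_conv_nth)
    then have "s ! ?n \<in> set s0"
      using s0 by (intro monom_pos_imp_mem) (auto simp: monom_fiber_def idx_tuples_def)
    moreover have "v \<le> s ! ?n"
      using i sorted sorted_wrt_less_nth_le_iff[of s i ?n] by simp
    ultimately show "v \<in> {..Max (set s0)}"
      using Max_ge[of "set s0" "s ! ?n"] by (meson List.finite_set atMost_iff le_trans)
  qed
  then have "monom_fiber g e \<subseteq> {s. set s \<subseteq> {..Max (set s0)} \<and> length s = length g}"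
    by (auto simp: monom_fiber_def idx_tuples_def)
  then show ?thesis
    by (rule finite_subset) (simp add: finite_lists_length_eq)
qed simp

section \<open>Maps bounded by a tuple\<close>

definition block :: "nat list \<Rightarrow> nat \<Rightarrow> nat" where
  "block b x = (LEAST j. x \<le> bsum b (Suc j))"

lemma block_eqI: "bsum b j < x \<Longrightarrow> x \<le> bsum b (Suc j) \<Longrightarrow> block b x = j"
  unfolding block_def
proof (rule Least_equality)
  fix y assume "bsum b j < x" "x \<le> bsum b (Suc y)"
  then show "j \<le> y" using bsum_mono[of "Suc y" j b] by (meson not_less_eq_eq order.trans not_le)
qed

lemma block_le: "x \<le> bsum b (Suc j) \<Longrightarrow> block b x \<le> j"
  unfolding block_def by (rule Least_le)

lemma block_bounds:
  assumes "x \<le> bsum b (length b)" and "b \<noteq> []"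
  shows "block b x < length b" and "x \<le> bsum b (Suc (block b x))"
proof -
  have x: "x \<le> bsum b (Suc (length b - 1))" using assms by simp
  show "block b x < length b" using block_le[OF x] assms(2) by (cases b) auto
  show "x \<le> bsum b (Suc (block b x))"
    unfolding block_def by (rule LeastI[of "\<lambda>j. x \<le> bsum b (Suc j)", OF x])
qed

definition bounded_maps :: "nat list \<Rightarrow> nat list \<Rightarrow> (nat \<Rightarrow> nat) set" where
  "bounded_maps b t = {f \<in> {1..bsum b (length b)} \<rightarrow>\<^sub>E UNIV.
     \<forall>j\<in>{1..length b}. f ` {1..bsum b j} \<subseteq> {1..t ! (j - 1)}}"

lemma bounded_maps_eq_PiE:
  assumes "b \<noteq> []" and "length t = length b" and "sorted t"
  shows "bounded_maps b t = (\<Pi>\<^sub>E x\<in>{1..bsum b (length b)}. {1..t ! block b x})"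
proof (intro equalityI subsetI)
  fix f assume f: "f \<in> bounded_maps b t"
  show "f \<in> (\<Pi>\<^sub>E x\<in>{1..bsum b (length b)}. {1..t ! block b x})"
  proof (rule PiE_I)
    fix x assume x: "x \<in> {1..bsum b (length b)}"
    then have "Suc (block b x) \<in> {1..length b}" "x \<in> {1..bsum b (Suc (block b x))}"
      using block_bounds[of x b] assms(1) by auto
    then show "f x \<in> {1..t ! block b x}"
      using f unfolding bounded_maps_def by fastforce
  qed (use f in \<open>auto simp: bounded_maps_def PiE_def extensional_def\<close>)
next
  fix f assume f: "f \<in> (\<Pi>\<^sub>E x\<in>{1..bsum b (length b)}. {1..t ! block b x})"
  have "f x \<in> {1..t ! (j - 1)}" if j: "j \<in> {1..length b}" and x: "x \<in> {1..bsum b j}" for j x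
  proof -
    have "x \<in> {1..bsum b (length b)}"
      using x j bsum_mono[of j "length b" b] by auto
    moreover have "t ! block b x \<le> t ! (j - 1)"
      using block_le[of x b "j - 1"] x j assms(2,3) by (auto intro: sorted_nth_mono)
    ultimately show ?thesis using f by fastforce
  qed
  then show "f \<in> bounded_maps b t"
    using f by (auto simp: bounded_maps_def PiE_def)
qed

lemma prod_block:
  "m \<le> length b \<Longrightarrow> (\<Prod>x\<in>{1..bsum b m}. h (block b x)) = (\<Prod>j<m. h j ^ (b ! j))"
proof (induction m)
  case (Suc m)
  then have m: "m < length b" by simp
  have "(\<Prod>x\<in>{Suc (bsum b m)..bsum b (Suc m)}. h (block b x))
      = (\<Prod>x\<in>{Suc (bsum b m)..bsum b (Suc m)}. h m)"
    by (rule prod.cong) (auto intro!: arg_cong[where f = h] block_eqI)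
  then have "(\<Prod>x\<in>{Suc (bsum b m)..bsum b (Suc m)}. h (block b x)) = h m ^ (b ! m)"
    using bsum_Suc[OF m] by simp
  moreover have "{1..bsum b (Suc m)} = {1..bsum b m} \<union> {Suc (bsum b m)..bsum b (Suc m)}"
    using bsum_Suc[OF m] by auto
  ultimately show ?case
    using Suc by (simp add: prod.union_disjoint)
qed simp

lemma card_bounded_maps:
  assumes "b \<noteq> []" and "length t = length b" and "sorted t"
  shows "card (bounded_maps b t) = (\<Prod>j<length b. t ! j ^ (b ! j))"
  using prod_block[of "length b" b "(!) t"] by (simp add: bounded_maps_eq_PiE[OF assms] card_PiE)

lemma finite_bounded_maps:
  assumes "b \<noteq> []" and "length t = length b" and "sorted t"
  shows "finite (bounded_maps b t)"
  by (simp add: bounded_maps_eq_PiE[OF assms] finite_PiE)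

lemma bounded_maps_le_last:
  assumes "b \<noteq> []" and "length t = length b" and "f \<in> bounded_maps b t"
    and "x \<in> {1..bsum b (length b)}"
  shows "f x \<in> {1..last t}"
proof -
  have "length b \<in> {1..length b}" using assms(1) by (simp add: Suc_le_eq)
  then have "f ` {1..bsum b (length b)} \<subseteq> {1..t ! (length b - 1)}"
    using assms(3) unfolding bounded_maps_def by blast
  then have "f x \<in> {1..t ! (length b - 1)}" using assms(4) by blast
  moreover have "t \<noteq> []" using assms(1,2) by auto
  ultimately show ?thesis using assms(2) by (simp add: last_conv_nth)
qed

lemma Mhat_eq_card_bounded_maps:
  assumes "length b = length a" and "a \<noteq> []" and "0 < last a"
  shows "Mhat a b e = card (Sigma (monom_fiber a e) (bounded_maps b))"
proof -
  have t: "length t = length b" "sorted t" if "t \<in> monom_fiber a e" for t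
    using that assms(1) by (auto simp: monom_fiber_def idx_tuples_def strict_sorted_imp_sorted)
  have "b \<noteq> []" using assms by auto
  then have "Mhat a b e = (\<Sum>t\<in>monom_fiber a e. card (bounded_maps b t))"
    unfolding Mhat_def monom_fiber_def[symmetric]
    using t card_bounded_maps assms(1) by (intro sum.cong) auto
  also have "\<dots> = card (Sigma (monom_fiber a e) (bounded_maps b))"
    using finite_monom_fiber[OF assms(2,3)] finite_bounded_maps[OF \<open>b \<noteq> []\<close>] t
    by (intro card_SigmaI[symmetric]) auto
  finally show ?thesis .
qed

section \<open>The maps counted by c\<close>

definition c_maps :: "nat list \<Rightarrow> nat list \<Rightarrow> (nat \<Rightarrow> nat) set" where
  "c_maps b I = {g \<in> {1..bsum b (length b)} \<rightarrow>\<^sub>E {1..Nsum I (length b)}.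
     (\<forall>j\<in>{1..length b}. g ` {1..bsum b j} \<subseteq> {1..Nsum I j}) \<and>
     g ` {1..bsum b (length b)} \<union> Nsum I ` {1..length b} = {1..Nsum I (length b)}}"

lemma c_coef_eq_card_c_maps: "c_coef b I = card (c_maps b I)"
  unfolding c_coef_def c_maps_def Let_def Setcompr_eq_image ..

lemma c_maps_PiE: "g \<in> c_maps b I \<Longrightarrow> g \<in> {1..bsum b (length b)} \<rightarrow>\<^sub>E {1..Nsum I (length b)}"
  by (simp add: c_maps_def)

lemma finite_c_maps: "finite (c_maps b I)"
  by (rule finite_subset[of _ "{1..bsum b (length b)} \<rightarrow>\<^sub>E {1..Nsum I (length b)}"])
     (auto simp: c_maps_def intro: finite_PiE)

lemma c_maps_gap_subset_image:
  assumes g: "g \<in> c_maps b I" and len: "length I = length b" and j: "j < length b"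
  shows "{Suc (Nsum I j)..<Nsum I (Suc j)} \<subseteq> g ` {Suc (bsum b j)..bsum b (length b)}"
proof
  fix p assume p: "p \<in> {Suc (Nsum I j)..<Nsum I (Suc j)}"
  have "p \<noteq> Nsum I l" if "l \<in> {1..length b}" for l
  proof (cases "l \<le> j")
    case True
    then show ?thesis using p Nsum_mono[of l j I] len j by simp
  next
    case False
    then show ?thesis using p Nsum_mono[of "Suc j" l I] len that by simp
  qed
  then have "p \<notin> Nsum I ` {1..length b}" by blast
  moreover have "p \<in> {1..Nsum I (length b)}"
    using p Nsum_Suc_bounds[of j I] len j by auto
  moreover have "{1..Nsum I (length b)} \<subseteq> g ` {1..bsum b (length b)} \<union> Nsum I ` {1..length b}"
    using g unfolding c_maps_def by blast
  ultimately obtain x where x: "x \<in> {1..bsum b (length b)}" "p = g x"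
    by blast
  have "\<not> x \<le> bsum b j"
  proof
    assume x_le: "x \<le> bsum b j"
    have "j \<noteq> 0"
    proof
      assume "j = 0"
      with x_le x show False by simp
    qed
    then have "g ` {1..bsum b j} \<subseteq> {1..Nsum I j}"
      using g j unfolding c_maps_def by auto
    moreover have "x \<in> {1..bsum b j}" using x x_le by simp
    ultimately have "g x \<in> {1..Nsum I j}" by blast
    then show False using p x by simp
  qed
  then show "p \<in> g ` {Suc (bsum b j)..bsum b (length b)}" using x by auto
qed

lemma c_maps_imp_I_range:
  assumes "g \<in> c_maps b I" and "length I = length b"
  shows "I \<in> I_range b"
  unfolding I_range_def
proof (intro CollectI conjI allI impI)
  fix j assume j: "j < length b"
  have "I ! j = card {Suc (Nsum I j)..<Nsum I (Suc j)}"
    using Nsum_Suc[of j I] assms(2) j by simp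
  also have "\<dots> \<le> card (g ` {Suc (bsum b j)..bsum b (length b)})"
    using c_maps_gap_subset_image[OF assms j] by (intro card_mono) simp_all
  also have "\<dots> \<le> card {Suc (bsum b j)..bsum b (length b)}"
    by (rule card_image_le) simp
  also have "\<dots> = sum_list (drop j b)"
    using sum_list_drop_eq_bsum_diff[of j b] j by simp
  finally show "I ! j \<le> sum_list (drop j b)" .
qed (fact assms(2))

lemma finite_I_range: "finite (I_range b)"
proof (rule finite_subset)
  show "I_range b \<subseteq> {I. set I \<subseteq> {..sum_list b} \<and> length I = length b}"
  proof (rule subsetI, intro CollectI conjI)
    fix I assume I: "I \<in> I_range b"
    have "I ! j \<le> sum_list b" if "j < length I" for j
    proof -
      have "sum_list b = sum_list (take j b) + sum_list (drop j b)"
        by (metis append_take_drop_id sum_list_append)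
      then show ?thesis using I that by (auto simp: I_range_def)
    qed
    then show "set I \<subseteq> {..sum_list b}" by (auto simp: in_set_conv_nth)
  qed (simp add: I_range_def)
qed (simp add: finite_lists_length_eq)

lemma sum_c_coef_M_eq_card:
  assumes "length b = length a" and "a \<noteq> []" and "0 < last a"
  shows "(\<Sum>I\<in>I_range b. c_coef b I * M (pad_comp a I) e)
    = card (Sigma (I_range b) (\<lambda>I. c_maps b I \<times> monom_fiber (pad_comp a I) e))"
proof -
  have "finite (monom_fiber (pad_comp a I) e)" if "I \<in> I_range b" for I
    using that assms last_pad_comp[of I a] by (intro finite_monom_fiber) (auto simp: I_range_def)
  then have "card (Sigma (I_range b) (\<lambda>I. c_maps b I \<times> monom_fiber (pad_comp a I) e))
      = (\<Sum>I\<in>I_range b. card (c_maps b I \<times> monom_fiber (pad_comp a I) e))"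
    using finite_I_range finite_c_maps by (intro card_SigmaI) auto
  then show ?thesis
    by (simp add: c_coef_eq_card_c_maps M_eq_card_monom_fiber card_cartesian_product)
qed

section \<open>The bijection\<close>

definition nth_comp :: "nat list \<Rightarrow> (nat \<Rightarrow> nat) \<Rightarrow> nat \<Rightarrow> nat \<Rightarrow> nat" where
  "nth_comp s g B = restrict (\<lambda>x. s ! (g x - 1)) {1..B}"

lemma marked_in_idx_tuples:
  assumes "s \<in> idx_tuples (Nsum I (length I))"
  shows "marked I s \<in> idx_tuples (length I)"
proof -
  have s: "length s = Nsum I (length I)" "sorted_wrt (<) s" "0 \<notin> set s"
    using assms by (auto simp: idx_tuples_def)
  have idx: "Nsum I (Suc j) - 1 < length s" if "j < length I" for j
    using s(1) Nsum_Suc_bounds[OF that] by linarith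
  have "sorted_wrt (<) (marked I s)"
    unfolding sorted_wrt_iff_nth_less
  proof (intro allI impI)
    fix i j assume "i < j" "j < length (marked I s)"
    then have "Nsum I (Suc i) - 1 < Nsum I (Suc j) - 1"
      using Nsum_strict_mono[of "Suc i" "Suc j" I] Nsum_Suc_bounds[of i I] by simp linarith
    then show "marked I s ! i < marked I s ! j"
      using \<open>i < j\<close> \<open>j < _\<close> idx sorted_wrt_nth_less[OF s(2)] by (simp add: nth_marked)
  qed
  moreover have "0 \<notin> set (marked I s)"
    using s(3) idx nth_mem by (fastforce simp: marked_def)
  ultimately show ?thesis by (simp add: idx_tuples_def)
qed

lemma nth_comp_in_bounded_maps:
  assumes g: "g \<in> c_maps b I" and len: "length I = length b"
    and s: "s \<in> idx_tuples (Nsum I (length b))"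
  shows "nth_comp s g (bsum b (length b)) \<in> bounded_maps b (marked I s)"
proof -
  have s_props: "length s = Nsum I (length b)" "sorted_wrt (<) s" "0 \<notin> set s"
    using s by (auto simp: idx_tuples_def)
  have "s ! (g x - 1) \<in> {1..marked I s ! (j - 1)}"
    if j: "j \<in> {1..length b}" and x: "x \<in> {1..bsum b j}" for j x
  proof -
    have "g x \<in> {1..Nsum I j}" using g j x unfolding c_maps_def by blast
    moreover have "Nsum I j \<le> length s"
      using j len s_props(1) Nsum_mono[of j "length b" I] by simp
    ultimately have "s ! (g x - 1) \<le> s ! (Nsum I j - 1)" "s ! (g x - 1) \<in> set s"
      using sorted_wrt_less_nth_le_iff[OF s_props(2)] by auto
    moreover have "marked I s ! (j - 1) = s ! (Nsum I j - 1)"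
      using j len by (cases j) (simp_all add: nth_marked)
    ultimately show ?thesis using s_props(3) by (cases "s ! (g x - 1)") auto
  qed
  moreover have "bsum b j \<le> bsum b (length b)" if "j \<le> length b" for j
    using that by (rule bsum_mono)
  ultimately show ?thesis
    by (fastforce simp: bounded_maps_def nth_comp_def)
qed

lemma set_eq_nth_comp_image_Un_marked:
  assumes g: "g \<in> c_maps b I" and len: "length I = length b"
    and s: "length s = Nsum I (length b)"
  shows "set s = nth_comp s g (bsum b (length b)) ` {1..bsum b (length b)} \<union> set (marked I s)"
proof -
  let ?B = "bsum b (length b)" and ?at = "\<lambda>p. s ! (p - 1)"
  have "set s = (!) s ` {..<length s}"
    by (simp add: lessThan_atLeast0 nth_image)
  also have "\<dots> = ?at ` Suc ` {..<length s}"
    by (simp only: image_image diff_Suc_1)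
  also have "Suc ` {..<length s} = g ` {1..?B} \<union> Nsum I ` Suc ` {..<length b}"
    using g s unfolding c_maps_def image_Suc_lessThan by simp
  also have "?at ` (g ` {1..?B} \<union> Nsum I ` Suc ` {..<length b})
      = nth_comp s g ?B ` {1..?B} \<union> set (marked I s)"
    using len by (simp only: image_Un image_image) (simp add: nth_comp_def marked_def lessThan_atLeast0)
  finally show ?thesis .
qed

lemma nth_comp_inj:
  assumes "distinct s"
    and "g \<in> {1..B} \<rightarrow>\<^sub>E {1..length s}" and "g' \<in> {1..B} \<rightarrow>\<^sub>E {1..length s}"
    and "nth_comp s g B = nth_comp s g' B"
  shows "g = g'"
proof
  fix x
  show "g x = g' x"
  proof (cases "x \<in> {1..B}")
    case True
    then have "s ! (g x - 1) = s ! (g' x - 1)"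
      using fun_cong[OF assms(4), of x] by (simp add: nth_comp_def)
    moreover have "g x \<in> {1..length s}" "g' x \<in> {1..length s}"
      using True assms(2,3) by auto
    then have "g x - 1 < length s" "g' x - 1 < length s" "1 \<le> g x" "1 \<le> g' x" by auto
    ultimately have "g x - 1 = g' x - 1"
      using nth_eq_iff_index_eq[OF assms(1)] by blast
    with \<open>1 \<le> g x\<close> \<open>1 \<le> g' x\<close> show ?thesis by linarith
  qed (use assms(2,3) in \<open>auto simp: PiE_def extensional_def\<close>)
qed

lemma marked_inj:
  assumes "distinct s" and "length I = length I'"
    and "Nsum I (length I) = length s" and "Nsum I' (length I') = length s"
    and "marked I s = marked I' s"
  shows "I = I'"
proof (rule Nsum_eq_imp_eq[OF assms(2)])
  fix j assume j: "j < length I"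
  have "s ! (Nsum I (Suc j) - 1) = s ! (Nsum I' (Suc j) - 1)"
    using arg_cong[OF assms(5), of "\<lambda>t. t ! j"] j assms(2) by (simp add: nth_marked)
  moreover have "0 < Nsum I (Suc j)" "Nsum I (Suc j) \<le> length s"
    "0 < Nsum I' (Suc j)" "Nsum I' (Suc j) \<le> length s"
    using Nsum_Suc_bounds[of j I] Nsum_Suc_bounds[of j I'] j assms(2-4) by auto
  ultimately have "Nsum I (Suc j) - 1 = Nsum I' (Suc j) - 1"
    using nth_eq_iff_index_eq[OF assms(1), of "Nsum I (Suc j) - 1" "Nsum I' (Suc j) - 1"] by simp
  with \<open>0 < Nsum I (Suc j)\<close> \<open>0 < Nsum I' (Suc j)\<close> show "Nsum I (Suc j) = Nsum I' (Suc j)"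
    by linarith
qed

lemma rank_comp_in_c_maps:
  assumes s: "sorted_wrt (<) s" and set_s: "set s = f ` {1..bsum b (length b)} \<union> set t"
    and f: "f \<in> bounded_maps b t" and len_t: "length t = length b"
    and N: "\<And>j. j < length b \<Longrightarrow> Nsum I (Suc j) = Suc (rank s (t ! j))"
    and N_last: "Nsum I (length b) = length s"
  shows "restrict (\<lambda>x. Suc (rank s (f x))) {1..bsum b (length b)} \<in> c_maps b I"
proof -
  let ?B = "bsum b (length b)" and ?r = "\<lambda>v. Suc (rank s v)"
  let ?g = "restrict (\<lambda>x. ?r (f x)) {1..?B}"
  have d: "distinct s" using s by (simp add: strict_sorted_iff)
  have "?r ` set t = ?r ` (!) t ` {..<length b}"
    using len_t by (simp add: lessThan_atLeast0 nth_image)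
  also have "\<dots> = Nsum I ` Suc ` {..<length b}"
    unfolding image_image using N by (intro image_cong) simp_all
  finally have "?r ` set t = Nsum I ` {1..length b}"
    unfolding image_Suc_lessThan .
  then have cover: "?g ` {1..?B} \<union> Nsum I ` {1..length b} = {1..Nsum I (length b)}"
    using image_Suc_rank[OF d] set_s N_last by (simp add: image_Un image_image)
  then have "?g \<in> {1..?B} \<rightarrow>\<^sub>E {1..Nsum I (length b)}"
    by (auto simp: restrict_PiE_iff)
  moreover have "?g ` {1..bsum b j} \<subseteq> {1..Nsum I j}" if j: "j \<in> {1..length b}" for j
  proof
    fix p assume "p \<in> ?g ` {1..bsum b j}"
    then obtain x where x: "x \<in> {1..bsum b j}" "p = ?g x" by blast
    have "x \<in> {1..?B}" using x j bsum_mono[of j "length b" b] by auto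
    moreover have "f x \<le> t ! (j - 1)" using f j x unfolding bounded_maps_def by fastforce
    moreover have "t ! (j - 1) \<in> set s" using j len_t set_s by auto
    moreover have "Nsum I j = ?r (t ! (j - 1))" using j N[of "j - 1"] by (cases j) auto
    ultimately show "p \<in> {1..Nsum I j}"
      using x rank_le_iff[OF s] set_s by auto
  qed
  ultimately show ?thesis
    using cover unfolding c_maps_def by blast
qed

lemma bounded_maps_preimage:
  assumes "b \<noteq> []" and t: "t \<in> idx_tuples (length b)" and f: "f \<in> bounded_maps b t"
  obtains I g s where "g \<in> c_maps b I" and "length I = length b"
    and "s \<in> idx_tuples (Nsum I (length b))"
    and "marked I s = t" and "nth_comp s g (bsum b (length b)) = f"
proof -
  let ?B = "bsum b (length b)"
  have t_props: "length t = length b" "sorted_wrt (<) t" "0 \<notin> set t"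
    using t by (auto simp: idx_tuples_def)
  define s where "s = sorted_list_of_set (f ` {1..?B} \<union> set t)"
  have set_s: "set s = f ` {1..?B} \<union> set t" and s: "sorted_wrt (<) s"
    by (simp_all add: s_def strict_sorted_list_of_set)
  then have d: "distinct s" by (simp add: strict_sorted_iff)
  define I where "I = gaps (map (rank s) t)"
  have N: "Nsum I (Suc j) = Suc (rank s (t ! j))" if "j < length b" for j
    using Nsum_gaps[OF sorted_wrt_map_rank[OF s _ t_props(2)]] that set_s t_props(1)
    by (auto simp: I_def)
  have "t \<noteq> []" using assms(1) t_props(1) by auto
  have set_s_bound: "\<forall>v\<in>set s. v \<le> last t"
    using set_s bounded_maps_le_last[OF assms(1) t_props(1) f] t_props sorted_wrt_nth_less
    by (fastforce simp: last_conv_nth[OF \<open>t \<noteq> []\<close>] in_set_conv_nth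
        intro: sorted_nth_mono[OF strict_sorted_imp_sorted])
  have N_last: "Nsum I (length b) = length s"
    using N[of "length b - 1"] rank_greatest[OF s _ set_s_bound] assms(1) set_s t_props(1)
      \<open>t \<noteq> []\<close> by (simp add: last_conv_nth)
  have "0 \<notin> set s"
    using set_s t_props(3) bounded_maps_le_last[OF assms(1) t_props(1) f] by fastforce
  then have "s \<in> idx_tuples (Nsum I (length b))"
    using s N_last by (simp add: idx_tuples_def)
  moreover have "marked I s = t"
    using N nth_rank[OF d] set_s t_props(1) by (intro nth_equalityI) (auto simp: I_def nth_marked)
  moreover have "nth_comp s (restrict (\<lambda>x. Suc (rank s (f x))) {1..?B}) ?B = f"
    using f nth_rank[OF d] set_s
    by (auto simp: nth_comp_def bounded_maps_def PiE_def extensional_def fun_eq_iff)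
  moreover have "restrict (\<lambda>x. Suc (rank s (f x))) {1..?B} \<in> c_maps b I"
    using rank_comp_in_c_maps[OF s set_s f t_props(1) N N_last] .
  ultimately show thesis
    using that t_props(1) by (simp add: I_def)
qed

definition decode :: "nat list \<Rightarrow> nat list \<times> (nat \<Rightarrow> nat) \<times> nat list \<Rightarrow> nat list \<times> (nat \<Rightarrow> nat)" where
  "decode b = (\<lambda>(I, g, s). (marked I s, nth_comp s g (bsum b (length b))))"

lemma inj_on_decode:
  "inj_on (decode b) (SIGMA I:{I. length I = length b}. c_maps b I \<times> idx_tuples (Nsum I (length b)))"
proof (rule inj_onI)
  let ?B = "bsum b (length b)"
  fix p q
  assume "p \<in> (SIGMA I:{I. length I = length b}. c_maps b I \<times> idx_tuples (Nsum I (length b)))"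
    and "q \<in> (SIGMA I:{I. length I = length b}. c_maps b I \<times> idx_tuples (Nsum I (length b)))"
  then obtain I g s I' g' s' where pq: "p = (I, g, s)" "q = (I', g', s')"
    and I: "length I = length b" "length I' = length b"
    and g: "g \<in> c_maps b I" "g' \<in> c_maps b I'"
    and s: "s \<in> idx_tuples (Nsum I (length b))" "s' \<in> idx_tuples (Nsum I' (length b))"
    by auto
  assume "decode b p = decode b q"
  then have marked_eq: "marked I s = marked I' s'" and nth_comp_eq: "nth_comp s g ?B = nth_comp s' g' ?B"
    using pq by (simp_all add: decode_def)
  have len_s: "length s = Nsum I (length b)" "length s' = Nsum I' (length b)"
    and sorted: "sorted_wrt (<) s" "sorted_wrt (<) s'"
    using s by (simp_all add: idx_tuples_def)
  have "set s = set s'"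
    using set_eq_nth_comp_image_Un_marked[OF g(1) I(1) len_s(1)]
      set_eq_nth_comp_image_Un_marked[OF g(2) I(2) len_s(2)] marked_eq nth_comp_eq by simp
  then have "s' = s" using strict_sorted_equal[OF sorted] by simp
  moreover have "distinct s" using sorted(1) by (simp add: strict_sorted_iff)
  moreover note c_maps_PiE[OF g(1)] c_maps_PiE[OF g(2)]
  ultimately have "g = g'" and "I = I'"
    using nth_comp_inj[of s g ?B g'] marked_inj[of s I I'] I len_s nth_comp_eq marked_eq by simp_all
  then show "p = q" using pq \<open>s' = s\<close> by simp
qed

lemma decode_in_bounded_maps:
  assumes "length b = length a" and "I \<in> I_range b" and "g \<in> c_maps b I"
    and "s \<in> monom_fiber (pad_comp a I) e"
  shows "decode b (I, g, s) \<in> (SIGMA t:monom_fiber a e. bounded_maps b t)"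
proof -
  have len_I: "length I = length b" using assms(2) by (simp add: I_range_def)
  then have s_idx: "s \<in> idx_tuples (Nsum I (length b))" and "monom a (marked I s) = e"
    using monom_fiber_pad_comp_iff[of I a] assms by auto
  then show ?thesis
    using marked_in_idx_tuples[of s I] nth_comp_in_bounded_maps[OF assms(3) len_I s_idx]
      len_I assms(1) by (simp add: decode_def monom_fiber_def)
qed

lemma bounded_maps_in_image_decode:
  assumes "length b = length a" and "a \<noteq> []"
    and "t \<in> monom_fiber a e" and "f \<in> bounded_maps b t"
  shows "(t, f) \<in> decode b ` (SIGMA I:I_range b. c_maps b I \<times> monom_fiber (pad_comp a I) e)"
proof -
  have "b \<noteq> []" "t \<in> idx_tuples (length b)"
    using assms by (auto simp: monom_fiber_def)
  then obtain I g s where "g \<in> c_maps b I" "length I = length b"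
    "s \<in> idx_tuples (Nsum I (length b))" "marked I s = t" "nth_comp s g (bsum b (length b)) = f"
    using assms(4) by (rule bounded_maps_preimage)
  moreover from this have "I \<in> I_range b" by (intro c_maps_imp_I_range)
  moreover have "s \<in> monom_fiber (pad_comp a I) e"
    using calculation assms(1,3) monom_fiber_pad_comp_iff[of I a] by (simp add: monom_fiber_def)
  ultimately show ?thesis
    by (intro image_eqI[of _ _ "(I, g, s)"]) (simp_all add: decode_def)
qed

lemma bij_betw_decode:
  assumes "length b = length a" and "a \<noteq> []"
  shows "bij_betw (decode b)
    (SIGMA I:I_range b. c_maps b I \<times> monom_fiber (pad_comp a I) e)
    (SIGMA t:monom_fiber a e. bounded_maps b t)"
proof (rule bij_betw_imageI)
  have "(SIGMA I:I_range b. c_maps b I \<times> monom_fiber (pad_comp a I) e)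
      \<subseteq> (SIGMA I:{I. length I = length b}. c_maps b I \<times> idx_tuples (Nsum I (length b)))"
    using monom_fiber_pad_comp_iff assms(1) by (auto simp: I_range_def)
  then show "inj_on (decode b) (SIGMA I:I_range b. c_maps b I \<times> monom_fiber (pad_comp a I) e)"
    by (rule inj_on_subset[OF inj_on_decode])
  show "decode b ` (SIGMA I:I_range b. c_maps b I \<times> monom_fiber (pad_comp a I) e)
    = (SIGMA t:monom_fiber a e. bounded_maps b t)"
    using decode_in_bounded_maps[OF assms(1)] bounded_maps_in_image_decode[OF assms]
    by blast
qed

theorem proposition5p4:
  fixes a b :: "nat list"
  assumes "length a \<ge> 1" and "length b = length a" and "last a > 0"
  shows "Mhat a b = (\<lambda>e. \<Sum>I \<in> I_range b. c_coef b I * M (pad_comp a I) e)"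
proof
  fix e
  have "a \<noteq> []" using assms(1) by auto
  have "Mhat a b e = card (Sigma (monom_fiber a e) (bounded_maps b))"
    using Mhat_eq_card_bounded_maps[OF assms(2) \<open>a \<noteq> []\<close> assms(3)] .
  also have "\<dots> = card (Sigma (I_range b) (\<lambda>I. c_maps b I \<times> monom_fiber (pad_comp a I) e))"
    using bij_betw_decode[OF assms(2) \<open>a \<noteq> []\<close>] by (rule bij_betw_same_card[symmetric])
  also have "\<dots> = (\<Sum>I\<in>I_range b. c_coef b I * M (pad_comp a I) e)"
    using sum_c_coef_M_eq_card[OF assms(2) \<open>a \<noteq> []\<close> assms(3)] by simp
  finally show "Mhat a b e = (\<Sum>I\<in>I_range b. c_coef b I * M (pad_comp a I) e)" .
qed

end
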